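(* Let $p$ be an odd prime, let $q\in\mathbb{C}_p$ with $|1-q|_p<1$, let $h\in\mathbb{Z}$, $r\in\mathbb{N}$, $n\ge 0$, and let $w_1,w_2\in\mathbb{N}$ with $w_1\equiv 1\pmod 2$ and $w_2\equiv 1\pmod 2$. Then, for $x\in\mathbb{Z}_p$, \[ \begin{split} &[w_1]_q^n\sum_{j_1,\dots,j_r=0}^{w_1-1}(-1)^{\sum_{l=1}^r j_l}\,q^{w_2\sum_{l=1}^r(h-l)j_l}\,E_{n,q^{w_1}}^{(h,r)}\!\left(w_2x+\tfrac{w_2}{w_1}(j_1+\cdots+j_r)\right)\\ &=[w_2]_q^n\sum_{j_1,\dots,j_r=0}^{w_2-1}(-1)^{\sum_{l=1}^r j_l}\,q^{w_1\sum_{l=1}^r(h-l)j_l}\,E_{n,q^{w_2}}^{(h,r)}\!\left(w_1x+\tfrac{w_1}{w_2}(j_1+\cdots+j_r)\right). \end{split} \]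
   Context: $\mathbb{Z}_p$ denotes the $p$-adic integers and $\mathbb{C}_p$ the completion of the algebraic closure of $\mathbb{Q}_p$. For $q\in\mathbb{C}_p$ with $|1-q|_p<1$, the $q$-number is $[x]_q=\frac{1-q^x}{1-q}$; for $w\in\mathbb{N}$, $[z]_{q^w}=\frac{1-q^{wz}}{1-q^w}$ (in all occurrences the exponent $wz$ is a $p$-adic integer). For a continuous function $f$ on $\mathbb{Z}_p$, the $p$-adic fermionic integral is $\int_{\mathbb{Z}_p}f(y)\,d\mu_{-1}(y)=\lim_{N\to\infty}\sum_{y=0}^{p^N-1}f(y)(-1)^y$; the multivariate integral over $y_1,\dots,y_r$ is the iterated one. For $h\in\mathbb{Z}$, $r\in\mathbb{N}$, the expansions of $q$-Euler polynomials $E_{n,q}^{(h,r)}(x)$ are defined by \[ E_{n,q}^{(h,r)}(x)=\int_{\mathbb{Z}_p}\!\cdots\!\int_{\mathbb{Z}_p} q^{\sum_{l=1}^r(h-l)y_l}\,[x+y_1+\cdots+y_r]_q^n\,d\mu_{-1}(y_1)\cdots d\mu_{-1}(y_r), \] equivalently by the generating function $\sum_{n\ge0}E_{n,q}^{(h,r)}(x)\frac{t^n}{n!}=2^r\sum_{m_1,\dots,m_r=0}^{\infty}q^{\sum_{l=1}^r(h-l)m_l}(-1)^{\sum_{l=1}^r m_l}e^{[x+m_1+\cdots+m_r]_q t}$. With base $q^{w}$ in place of $q$, this means $E_{n,q^{w}}^{(h,r)}(z)=\int\cdots\int q^{w\sum_{l}(h-l)y_l}[z+y_1+\cdots+y_r]_{q^{w}}^n\,d\mu_{-1}(y_1)\cdots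 d\mu_{-1}(y_r)$. *)

theory Defs
  imports Complex_Main "HOL-Library.FuncSet" "HOL-Computational_Algebra.Primes"
begin

text \<open>We model C_p by an arbitrary field K carrying a
  non-archimedean absolute value nv which is complete, algebraically closed and restricts to
  the p-adic absolute value on the rationals (nv p = 1/p).  Z_p is realised inside K as the
  closure of the integers.\<close>

definition nonarch_abs :: "('a::field \<Rightarrow> real) \<Rightarrow> bool" where
  "nonarch_abs nv \<longleftrightarrow> (\<forall>x. 0 \<le> nv x) \<and> (\<forall>x. nv x = 0 \<longleftrightarrow> x = 0)
     \<and> (\<forall>x y. nv (x * y) = nv x * nv y) \<and> (\<forall>x y. nv (x + y) \<le> max (nv x) (nv y))"

definition nv_tendsto :: "('a::field \<Rightarrow> real) \<Rightarrow> (nat \<Rightarrow> 'a) \<Rightarrow> 'a \<Rightarrow> bool" where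
  "nv_tendsto nv f L \<longleftrightarrow> (\<forall>e>0. \<exists>N. \<forall>m\<ge>N. nv (f m - L) < e)"

definition nv_cauchy :: "('a::field \<Rightarrow> real) \<Rightarrow> (nat \<Rightarrow> 'a) \<Rightarrow> bool" where
  "nv_cauchy nv f \<longleftrightarrow> (\<forall>e>0. \<exists>N. \<forall>m\<ge>N. \<forall>k\<ge>N. nv (f m - f k) < e)"

definition nv_lim :: "('a::field \<Rightarrow> real) \<Rightarrow> (nat \<Rightarrow> 'a) \<Rightarrow> 'a" where
  "nv_lim nv f = (THE L. nv_tendsto nv f L)"

definition is_Cp_model :: "nat \<Rightarrow> ('a::field \<Rightarrow> real) \<Rightarrow> bool" where
  "is_Cp_model p nv \<longleftrightarrow> nonarch_abs nv \<and> nv (of_nat p) = 1 / real p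
     \<and> (\<forall>f. nv_cauchy nv f \<longrightarrow> (\<exists>L. nv_tendsto nv f L))
     \<and> (\<forall>n>0. \<forall>c::nat \<Rightarrow> 'a. c n \<noteq> 0 \<longrightarrow> (\<exists>z. (\<Sum>i\<le>n. c i * z ^ i) = 0))"

definition Zp :: "('a::field \<Rightarrow> real) \<Rightarrow> 'a set" where
  "Zp nv = {x. \<exists>s::nat \<Rightarrow> int. nv_tendsto nv (\<lambda>m. of_int (s m)) x}"

definition qpow :: "('a::field \<Rightarrow> real) \<Rightarrow> 'a \<Rightarrow> 'a \<Rightarrow> 'a" where
  "qpow nv q x = (THE L. \<forall>s::nat \<Rightarrow> int. nv_tendsto nv (\<lambda>m. of_int (s m)) x
                      \<longrightarrow> nv_tendsto nv (\<lambda>m. q powi s m) L)"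

text \<open>q-number with base q^w, given the (p-adic integer) exponent a = w z:
  [z]_{q^w} = (1 - q^(wz)) / (1 - q^w).\<close>
definition qnum :: "('a::field \<Rightarrow> real) \<Rightarrow> 'a \<Rightarrow> nat \<Rightarrow> 'a \<Rightarrow> 'a" where
  "qnum nv q w a = (1 - qpow nv q a) / (1 - q ^ w)"

definition fint :: "nat \<Rightarrow> ('a::field \<Rightarrow> real) \<Rightarrow> ('a \<Rightarrow> 'a) \<Rightarrow> 'a" where
  "fint p nv f = nv_lim nv (\<lambda>N. \<Sum>y<p ^ N. f (of_nat y) * (- 1) ^ y)"

text \<open>Iterated fermionic integral over the variables y 0, ..., y (r-1)
  (y l stands for y_(l+1) of the paper).\<close>
fun fint_multi :: "nat \<Rightarrow> ('a::field \<Rightarrow> real) \<Rightarrow> nat \<Rightarrow> ((nat \<Rightarrow> 'a) \<Rightarrow> 'a) \<Rightarrow> 'a" where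
  "fint_multi p nv 0 F = F (\<lambda>_. 0)"
| "fint_multi p nv (Suc r) F = fint_multi p nv r (\<lambda>ys. fint p nv (\<lambda>y. F (ys(r := y))))"

text \<open>Eq p nv q w h r n a = E^{(h,r)}_{n,q^w}(z) where a = w z (a p-adic integer).\<close>
definition Eq :: "nat \<Rightarrow> ('a::field \<Rightarrow> real) \<Rightarrow> 'a \<Rightarrow> nat \<Rightarrow> int \<Rightarrow> nat \<Rightarrow> nat \<Rightarrow> 'a \<Rightarrow> 'a" where
  "Eq p nv q w h r n a = fint_multi p nv r (\<lambda>y.
      qpow nv q (of_nat w * (\<Sum>l<r. of_int (h - int (l + 1)) * y l))
      * (qnum nv q w (a + of_nat w * (\<Sum>l<r. y l))) ^ n)"

end

theory Submission
  imports Defs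
begin

text \<open>
  For u with nv (u - 1) < 1 the fermionic integral of t \<mapsto> u^t equals 2 / (1 + u): the
  partial sum over {0..<p^N} is an alternating geometric sum with an odd number of terms,
  namely (1 + u^(p^N)) / (1 + u), and u^(p^N) \<rightarrow> 1 because raising to the p-th power contracts
  the distance to 1. Expanding [z]_{q^w}^n binomially turns the integrand of E^{(h,r)}_{n,q^w}
  into a combination of products of such exponentials, so E^{(h,r)}_{n,q^w} has a closed
  form as a finite sum. Inserting it into the left-hand side, the sum over j \<in> {0..w1-1}^r
  factors into alternating geometric sums in q^{w2(h-l+k)}, which evaluate to
  (1 + q^{w1 w2 (h-l+k)}) / (1 + q^{w2 (h-l+k)}). The result is an expression symmetric in
  w1 and w2, and the right-hand side reduces to the same expression.
\<close>

lemma sum_alternating_powers_odd: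
  fixes z :: "'a::field"
  assumes "odd n" and "1 + z \<noteq> 0"
  shows "(\<Sum>y<n. (- z) ^ y) = (1 + z ^ n) / (1 + z)"
proof -
  have "- z \<noteq> 1" using assms(2) by (metis add.inverse_inverse neg_eq_iff_add_eq_0)
  then have "(\<Sum>y<n. (- z) ^ y) = ((- z) ^ n - 1) / (- z - 1)"
    by (rule geometric_sum)
  also have "(- z) ^ n - 1 = - (1 + z ^ n)" using assms(1) by simp
  also have "- z - 1 = - (1 + z)" by simp
  finally show ?thesis by (simp only: minus_divide_divide)
qed

lemma sum_PiE_prod_alternating_powers:
  fixes u :: "nat \<Rightarrow> 'a::field"
  assumes "odd w" and "\<And>l. l < r \<Longrightarrow> 1 + u l \<noteq> 0"
  shows "(\<Sum>j\<in>Pi\<^sub>E {..<r} (\<lambda>_. {..<w}). \<Prod>l<r. (- u l) ^ j l) = (\<Prod>l<r. (1 + u l ^ w) / (1 + u l))"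
proof -
  have "(\<Sum>j\<in>Pi\<^sub>E {..<r} (\<lambda>_. {..<w}). \<Prod>l<r. (- u l) ^ j l) = (\<Prod>l<r. \<Sum>t<w. (- u l) ^ t)"
    by (rule prod_sum_PiE[symmetric]) auto
  also have "\<dots> = (\<Prod>l<r. (1 + u l ^ w) / (1 + u l))"
    using assms by (intro prod.cong refl) (simp add: sum_alternating_powers_odd)
  finally show ?thesis .
qed

lemma prod_power_power_int_affine:
  fixes q c :: "'a::field"
  assumes "q \<noteq> 0"
  shows "(\<Prod>l\<in>A. (c * q powi (a l + b)) ^ v l)
    = c ^ (\<Sum>l\<in>A. v l) * q powi (\<Sum>l\<in>A. a l * int (v l)) * q powi (b * int (\<Sum>l\<in>A. v l))"
proof (induction A rule: infinite_finite_induct)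
  case (insert i A)
  have "(c * q powi (a i + b)) ^ v i = c ^ v i * q powi (a i * int (v i)) * q powi (b * int (v i))"
    using assms by (simp add: power_mult_distrib power_int_power' power_int_add distrib_right)
  then show ?case
    using insert assms by (simp add: power_add power_int_add distrib_left mult_ac)
qed simp_all

lemma prod_power_int_shifted:
  fixes q c :: "'a::field"
  assumes "q \<noteq> 0"
  shows "(\<Prod>l<r. (c * q powi (int w * (h - int (l + 1) + int k))) ^ v l)
    = c ^ (\<Sum>l<r. v l) * q powi (int w * (\<Sum>l<r. (h - int (l + 1)) * int (v l)))
      * (q powi (int w * int (\<Sum>l<r. v l))) ^ k"
proof -
  have "(\<Prod>l<r. (c * q powi (int w * (h - int (l + 1) + int k))) ^ v l)
      = (\<Prod>l<r. (c * q powi (int w * (h - int (l + 1)) + int w * int k)) ^ v l)"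
    by (simp add: distrib_left)
  also have "\<dots> = c ^ (\<Sum>l<r. v l) * q powi (\<Sum>l<r. int w * (h - int (l + 1)) * int (v l))
      * q powi (int w * int k * int (\<Sum>l<r. v l))"
    by (rule prod_power_power_int_affine[OF assms])
  finally show ?thesis
    using assms by (simp add: sum_distrib_left power_int_power' mult_ac)
qed

locale nonarch_field =
  fixes nv :: "'a::field \<Rightarrow> real"
  assumes nonarch_abs: "nonarch_abs nv"
begin

lemma nv_nonneg [simp]: "0 \<le> nv x"
  using nonarch_abs unfolding nonarch_abs_def by blast

lemma nv_eq_0_iff [simp]: "nv x = 0 \<longleftrightarrow> x = 0"
  using nonarch_abs unfolding nonarch_abs_def by blast

lemma nv_0 [simp]: "nv 0 = 0"
  by simp

lemma nv_mult: "nv (x * y) = nv x * nv y"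
  using nonarch_abs unfolding nonarch_abs_def by blast

lemma nv_add_le: "nv (x + y) \<le> max (nv x) (nv y)"
  using nonarch_abs unfolding nonarch_abs_def by blast

lemma nv_1 [simp]: "nv 1 = 1"
  using nv_mult[of 1 1] by (metis mult_cancel_left1 mult_1 nv_eq_0_iff one_neq_zero)

lemma nv_minus [simp]: "nv (- x) = nv x"
proof -
  have "nv (-1) * nv (-1) = 1" using nv_mult[of "-1" "-1"] by simp
  then have "(nv (-1) - 1) * (nv (-1) + 1) = 0" by (simp add: algebra_simps)
  moreover have "nv (-1) + 1 > 0" using nv_nonneg[of "-1"] by linarith
  ultimately have "nv (-1) = 1" by simp
  then show ?thesis using nv_mult[of "-1" x] by simp
qed

lemma nv_diff_commute: "nv (x - y) = nv (y - x)"
  by (metis minus_diff_eq nv_minus)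

lemma nv_diff_trans_le: "nv (x - z) \<le> max (nv (x - y)) (nv (y - z))"
  using nv_add_le[of "x - y" "y - z"] by simp

lemma nv_inverse: "nv (inverse x) = inverse (nv x)"
proof (cases "x = 0")
  case False
  have "nv x * nv (inverse x) = 1" using False nv_mult[of x "inverse x"] by simp
  then show ?thesis by (metis inverse_unique)
qed simp

lemma nv_power: "nv (x ^ n) = nv x ^ n"
  by (induction n) (simp_all add: nv_mult)

lemma nv_sum_le:
  assumes "\<And>i. i \<in> A \<Longrightarrow> nv (f i) \<le> B" and "0 \<le> B"
  shows "nv (\<Sum>i\<in>A. f i) \<le> B"
  using assms
proof (induction A rule: infinite_finite_induct)
  case (insert a A)
  then have "nv (f a) \<le> B" and "nv (sum f A) \<le> B" by auto
  then show ?case using insert.hyps nv_add_le[of "f a" "sum f A"] by simp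
qed simp_all

lemma nv_of_nat_le: "nv (of_nat n) \<le> 1"
proof (induction n)
  case (Suc n)
  then show ?case using nv_add_le[of 1 "of_nat n"] by (simp add: add.commute)
qed simp

lemma nv_of_int_le: "nv (of_int z) \<le> 1"
proof (cases "z \<ge> 0")
  case True
  then show ?thesis using nv_of_nat_le[of "nat z"] by simp
next
  case False
  then show ?thesis using nv_of_nat_le[of "nat (- z)"] nv_minus[of "of_int z"] by simp
qed

lemma nv_add_eq_left:
  assumes "nv y < nv x"
  shows "nv (x + y) = nv x"
proof -
  have "nv x \<le> max (nv (x + y)) (nv y)" using nv_add_le[of "x + y" "- y"] by simp
  then have "nv x \<le> nv (x + y)" using assms by auto
  moreover have "nv (x + y) \<le> nv x" using nv_add_le[of x y] assms by auto
  ultimately show ?thesis by simp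
qed

lemma nv_eq_1_if_near_1: "nv (u - 1) < 1 \<Longrightarrow> nv u = 1"
  using nv_add_eq_left[of "u - 1" 1] by simp

lemma nv_power_diff_1_le:
  assumes "nv u \<le> 1"
  shows "nv (u ^ i - 1) \<le> nv (u - 1)"
proof -
  have "nv (\<Sum>j<i. u ^ j) \<le> 1"
    using assms by (intro nv_sum_le) (auto simp: nv_power power_le_one)
  then have "nv (u - 1) * nv (\<Sum>j<i. u ^ j) \<le> nv (u - 1)"
    by (intro mult_right_le_one_le) auto
  then show ?thesis by (simp add: power_diff_1_eq nv_mult)
qed

lemma nv_power_int_diff_1_le:
  assumes "nv (u - 1) < 1"
  shows "nv (u powi m - 1) \<le> nv (u - 1)"
proof (cases "m \<ge> 0")
  case True
  then show ?thesis using nv_power_diff_1_le[of u "nat m"] nv_eq_1_if_near_1[OF assms]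
    by (simp add: power_int_def)
next
  case False
  define k where "k = nat (- m)"
  have u: "nv u = 1" using nv_eq_1_if_near_1[OF assms] .
  then have "u \<noteq> 0" by auto
  then have "u powi m - 1 = inverse (u ^ k) * (1 - u ^ k)"
    using False by (simp add: k_def power_int_def field_simps)
  then have "nv (u powi m - 1) = nv (u ^ k - 1)"
    using u nv_diff_commute by (simp add: nv_mult nv_inverse nv_power)
  also have "\<dots> \<le> nv (u - 1)" using nv_power_diff_1_le u by simp
  finally show ?thesis .
qed

lemma nv_tendsto_unique:
  assumes "nv_tendsto nv f L" and "nv_tendsto nv f M"
  shows "L = M"
proof (rule ccontr)
  assume "L \<noteq> M"
  then have d: "nv (L - M) > 0" by (simp add: order_le_neq_trans)
  obtain N1 where N1: "\<forall>m\<ge>N1. nv (f m - L) < nv (L - M)"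
    using assms(1) d unfolding nv_tendsto_def by blast
  obtain N2 where N2: "\<forall>m\<ge>N2. nv (f m - M) < nv (L - M)"
    using assms(2) d unfolding nv_tendsto_def by blast
  define m where "m = max N1 N2"
  have "nv (L - M) \<le> max (nv (L - f m)) (nv (f m - M))" by (rule nv_diff_trans_le)
  also have "\<dots> < nv (L - M)" using N1 N2 nv_diff_commute[of L "f m"] by (auto simp: m_def)
  finally show False by simp
qed

lemma nv_lim_eqI: "nv_tendsto nv f L \<Longrightarrow> nv_lim nv f = L"
  unfolding nv_lim_def using nv_tendsto_unique by blast

lemma nv_tendsto_const: "nv_tendsto nv (\<lambda>m. c) c"
  unfolding nv_tendsto_def by simp

lemma nv_tendsto_add:
  assumes "nv_tendsto nv f L" and "nv_tendsto nv g M"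
  shows "nv_tendsto nv (\<lambda>m. f m + g m) (L + M)"
  unfolding nv_tendsto_def
proof (intro allI impI)
  fix e :: real
  assume "e > 0"
  then obtain N1 N2 where "\<forall>m\<ge>N1. nv (f m - L) < e" and "\<forall>m\<ge>N2. nv (g m - M) < e"
    using assms unfolding nv_tendsto_def by meson
  then have "nv (f m + g m - (L + M)) < e" if "m \<ge> max N1 N2" for m
    using that nv_add_le[of "f m - L" "g m - M"] by (simp add: add_diff_add) (meson le_less_trans max_less_iff_conj)
  then show "\<exists>N. \<forall>m\<ge>N. nv (f m + g m - (L + M)) < e" by blast
qed

lemma nv_tendsto_mult_left:
  assumes "nv_tendsto nv f L"
  shows "nv_tendsto nv (\<lambda>m. c * f m) (c * L)"
proof (cases "c = 0")
  case True
  then show ?thesis by (simp add: nv_tendsto_const)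
next
  case False
  then have c: "nv c > 0" by (simp add: order_le_neq_trans)
  show ?thesis unfolding nv_tendsto_def
  proof (intro allI impI)
    fix e :: real
    assume "e > 0"
    then obtain N where N: "\<forall>m\<ge>N. nv (f m - L) < e / nv c"
      using assms c unfolding nv_tendsto_def by (meson divide_pos_pos)
    have "nv (c * f m - c * L) = nv c * nv (f m - L)" for m
      by (simp add: nv_mult right_diff_distrib[symmetric])
    then have "\<forall>m\<ge>N. nv (c * f m - c * L) < e"
      using N c by (simp add: field_simps)
    then show "\<exists>N. \<forall>m\<ge>N. nv (c * f m - c * L) < e" by blast
  qed
qed

lemma nv_tendsto_sum:
  assumes "finite K" and "\<And>k. k \<in> K \<Longrightarrow> nv_tendsto nv (f k) (L k)"
  shows "nv_tendsto nv (\<lambda>m. \<Sum>k\<in>K. f k m) (\<Sum>k\<in>K. L k)"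
  using assms
  by (induction K rule: finite_induct) (simp_all add: nv_tendsto_const nv_tendsto_add)

lemma Zp_of_nat_mult:
  assumes "x \<in> Zp nv"
  shows "of_nat c * x \<in> Zp nv"
proof -
  obtain s where "nv_tendsto nv (\<lambda>m. of_int (s m)) x"
    using assms unfolding Zp_def by blast
  then have "nv_tendsto nv (\<lambda>m. of_int (int c * s m)) (of_nat c * x)"
    using nv_tendsto_mult_left[of _ x "of_nat c"] by simp
  then show ?thesis unfolding Zp_def by (intro CollectI exI)
qed

end

locale padic_abs = nonarch_field +
  fixes p :: nat
  assumes prime: "prime p" and nv_p: "nv (of_nat p) = 1 / real p"
begin

lemma p_gt_1: "p > 1"
  using prime prime_gt_1_nat by blast

lemma nv_of_int_eq_1_if_not_dvd:
  assumes "\<not> int p dvd u"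
  shows "nv (of_int u) = 1"
proof -
  have "coprime (int p) u"
    using assms prime by (simp add: prime_imp_coprime_int prime_nat_iff_prime)
  then obtain a b where ab: "a * u + b * int p = 1"
    using bezout_int[of u "int p"] by (metis coprime_imp_gcd_eq_1 gcd.commute)
  have "1 = nv (of_int (a * u + b * int p))" using ab by simp
  also have "\<dots> \<le> max (nv (of_int a) * nv (of_int u)) (nv (of_int b) * (1 / real p))"
    using nv_add_le[of "of_int a * of_int u" "of_int b * of_nat p"] by (simp add: nv_mult nv_p)
  also have "\<dots> \<le> max (nv (of_int u)) (1 / real p)"
    using nv_of_int_le[of a] nv_of_int_le[of b] p_gt_1
    by (intro max.mono mult_left_le_one_le) auto
  finally have "1 \<le> max (nv (of_int u)) (1 / real p)" .
  moreover have "1 / real p < 1" using p_gt_1 by simp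
  ultimately show ?thesis using nv_of_int_le[of u] by linarith
qed

lemma prime_power_dvd_if_nv_less:
  "nv (of_int z) < (1 / real p) ^ e \<Longrightarrow> int p ^ e dvd z"
proof (induction e arbitrary: z)
  case (Suc e)
  have "(1 / real p) ^ Suc e \<le> 1" using p_gt_1 by (intro power_le_one) auto
  then have "int p dvd z"
    using Suc.prems nv_of_int_eq_1_if_not_dvd by fastforce
  then obtain z' where z': "z = int p * z'" by blast
  then have "nv (of_int z') = real p * nv (of_int z)"
    using p_gt_1 by (simp add: nv_mult nv_p)
  also have "\<dots> < real p * (1 / real p) ^ Suc e"
    using Suc.prems p_gt_1 by (intro mult_strict_left_mono) auto
  also have "\<dots> = (1 / real p) ^ e" using p_gt_1 by simp
  finally show ?case using Suc.IH z' by simp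
qed simp

lemma nv_power_prime_diff_1_le:
  assumes "nv (u - 1) < 1"
  shows "nv (u ^ p - 1) \<le> nv (u - 1) * max (1 / real p) (nv (u - 1))"
proof -
  have u: "nv u = 1" using nv_eq_1_if_near_1[OF assms] .
  have "(\<Sum>i<p. u ^ i) = of_nat p + (\<Sum>i<p. u ^ i - 1)"
    by (simp add: sum_subtractf)
  moreover have "nv (\<Sum>i<p. u ^ i - 1) \<le> max (1 / real p) (nv (u - 1))"
    using nv_power_diff_1_le u by (intro nv_sum_le) (auto intro: max.coboundedI2)
  ultimately have "nv (\<Sum>i<p. u ^ i) \<le> max (1 / real p) (nv (u - 1))"
    using nv_add_le[of "of_nat p" "\<Sum>i<p. u ^ i - 1"] nv_p by simp
  then show ?thesis
    by (simp add: power_diff_1_eq nv_mult mult_left_mono)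
qed

lemma nv_power_prime_power_diff_1_le:
  assumes "nv (u - 1) < 1"
  shows "nv (u ^ p ^ e - 1) \<le> nv (u - 1) * max (1 / real p) (nv (u - 1)) ^ e"
proof (induction e)
  case (Suc e)
  define c where "c = max (1 / real p) (nv (u - 1))"
  have c: "0 \<le> c" "c < 1" using assms p_gt_1 by (auto simp: c_def le_max_iff_disj)
  define v where "v = u ^ p ^ e"
  have "nv (v - 1) \<le> nv (u - 1) * c ^ e" using Suc by (simp add: v_def c_def)
  also have "\<dots> \<le> nv (u - 1)" using c by (simp add: mult_left_le power_le_one)
  finally have v: "nv (v - 1) \<le> nv (u - 1)" .
  have "u ^ p ^ Suc e = v ^ p" by (simp add: v_def mult.commute flip: power_mult)
  then have "nv (u ^ p ^ Suc e - 1) \<le> nv (v - 1) * max (1 / real p) (nv (v - 1))"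
    using nv_power_prime_diff_1_le[of v] v assms by simp
  also have "\<dots> \<le> nv (v - 1) * c"
    using v by (intro mult_left_mono) (auto simp: c_def)
  also have "\<dots> \<le> nv (u - 1) * c ^ e * c"
    using Suc c by (intro mult_right_mono) (auto simp: v_def c_def)
  finally show ?case by (simp add: c_def mult_ac)
qed simp

lemma nv_power_int_diff_1_small:
  assumes "nv (u - 1) < 1" and "0 < eps"
  obtains e where "\<And>t. int p ^ e dvd t \<Longrightarrow> nv (u powi t - 1) < eps"
proof -
  define c where "c = max (1 / real p) (nv (u - 1))"
  have c: "0 < c" "c < 1" using assms p_gt_1 by (auto simp: c_def less_max_iff_disj)
  obtain e where e: "c ^ e < eps" using real_arch_pow_inv[OF assms(2) c(2)] by blast
  have "nv (u powi t - 1) < eps" if dvd: "int p ^ e dvd t" for t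
  proof -
    obtain m where t: "t = int (p ^ e) * m" using dvd by (auto simp: dvd_def)
    define v where "v = u ^ p ^ e"
    have v: "nv (v - 1) \<le> nv (u - 1) * c ^ e"
      using nv_power_prime_power_diff_1_le[OF assms(1)] by (simp add: v_def c_def)
    have "nv (u - 1) * c ^ e \<le> nv (u - 1)" and "nv (u - 1) * c ^ e \<le> c ^ e"
      using assms(1) c by (auto intro: mult_left_le mult_left_le_one_le simp: power_le_one)
    then have "nv (v - 1) < 1" and "nv (v - 1) < eps" using v assms(1) e by linarith+
    moreover have "u powi t = v powi m"
      unfolding t v_def power_int_mult by (simp only: power_int_of_nat)
    ultimately show ?thesis using nv_power_int_diff_1_le[of v m] by simp
  qed
  then show ?thesis using that by blast
qed

lemma nv_power_int_diff_small:
  assumes "nv (u - 1) < 1" and "0 < eps"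
  obtains d where "d > 0"
    and "\<And>a b::int. nv (of_int a - of_int b) < d \<Longrightarrow> nv (u powi a - u powi b) < eps"
proof -
  obtain e where e: "\<And>t. int p ^ e dvd t \<Longrightarrow> nv (u powi t - 1) < eps"
    using nv_power_int_diff_1_small[OF assms] by blast
  have "u \<noteq> 0" using nv_eq_1_if_near_1[OF assms(1)] by auto
  have "nv (u powi a - u powi b) < eps" if "nv (of_int a - of_int b) < (1 / real p) ^ e" for a b
  proof -
    have "int p ^ e dvd a - b" using prime_power_dvd_if_nv_less[of "a - b" e] that by simp
    moreover have "u powi a - u powi b = u powi b * (u powi (a - b) - 1)"
      using \<open>u \<noteq> 0\<close> by (simp add: power_int_diff field_simps)
    moreover have "nv (u powi b) = 1"
      using nv_eq_1_if_near_1[OF assms(1)] by (simp add: power_int_def nv_power nv_inverse)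
    ultimately show ?thesis using e by (simp add: nv_mult)
  qed
  moreover have "(1 / real p) ^ e > 0" using p_gt_1 by simp
  ultimately show ?thesis using that by blast
qed

lemma nv_power_int_diff_eventually_small:
  assumes "nv (u - 1) < 1" and "0 < eps"
    and "nv_tendsto nv (\<lambda>m. of_int (s m)) x" and "nv_tendsto nv (\<lambda>m. of_int (s' m)) x"
  obtains N where "\<And>m k. m \<ge> N \<Longrightarrow> k \<ge> N \<Longrightarrow> nv (u powi s m - u powi s' k) < eps"
proof -
  obtain d where "d > 0"
    and d: "\<And>a b::int. nv (of_int a - of_int b) < d \<Longrightarrow> nv (u powi a - u powi b) < eps"
    using nv_power_int_diff_small[OF assms(1,2)] by blast
  then obtain N1 N2 where N1: "\<forall>m\<ge>N1. nv (of_int (s m) - x) < d"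
    and N2: "\<forall>k\<ge>N2. nv (of_int (s' k) - x) < d"
    using assms(3,4) unfolding nv_tendsto_def by meson
  then have "nv (u powi s m - u powi s' k) < eps" if "m \<ge> max N1 N2" "k \<ge> max N1 N2" for m k
  proof (intro d)
    have "nv (of_int (s m) - x) < d" and "nv (x - of_int (s' k)) < d"
      using that N1 N2 nv_diff_commute[of x] by auto
    then show "nv (of_int (s m) - of_int (s' k)) < d"
      using nv_diff_trans_le[of "of_int (s m)" "of_int (s' k)" x] by linarith
  qed
  then show ?thesis using that by blast
qed

lemma nv_tendsto_power_prime_power:
  assumes "nv (v - 1) < 1"
  shows "nv_tendsto nv (\<lambda>N. v ^ p ^ N) 1"
  unfolding nv_tendsto_def
proof (intro allI impI)
  fix eps :: real
  assume "eps > 0"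
  then obtain e where e: "\<And>t. int p ^ e dvd t \<Longrightarrow> nv (v powi t - 1) < eps"
    using nv_power_int_diff_1_small[OF assms] by blast
  have "nv (v ^ p ^ N - 1) < eps" if "N \<ge> e" for N
  proof -
    have "v ^ p ^ N = v powi int (p ^ N)" by (simp only: power_int_of_nat)
    then show ?thesis using e[of "int (p ^ N)"] that by (simp add: le_imp_power_dvd)
  qed
  then show "\<exists>N. \<forall>n\<ge>N. nv (v ^ p ^ n - 1) < eps" by blast
qed

end

locale odd_padic_abs = padic_abs +
  assumes odd_p: "odd p"
begin

lemma nv_2: "nv (2::'a) = 1"
proof -
  have "p > 2" using odd_p p_gt_1 by (cases "p = 2") auto
  then have "\<not> int p dvd 2" using zdvd_imp_le[of "int p" 2] by auto
  then show ?thesis using nv_of_int_eq_1_if_not_dvd[of 2] by simp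
qed

lemma one_plus_nonzero_if_near_1:
  assumes "nv (v - 1) < 1"
  shows "1 + v \<noteq> 0"
proof -
  have "nv (2 + (v - 1)) = 1" using nv_add_eq_left[of "v - 1" 2] assms nv_2 by simp
  then show ?thesis by (auto simp: algebra_simps)
qed

lemma fint_exponential_sum:
  assumes "finite K" and near_1: "\<And>k. k \<in> K \<Longrightarrow> nv (v k - 1) < 1"
    and f: "\<And>t. f (of_nat t) = (\<Sum>k\<in>K. A k * v k ^ t)"
  shows "fint p nv f = (\<Sum>k\<in>K. 2 * A k / (1 + v k))"
proof -
  have partial_sum: "(\<Sum>y<p ^ N. f (of_nat y) * (- 1) ^ y)
      = (\<Sum>k\<in>K. A k / (1 + v k) * (1 + v k ^ p ^ N))" for N
  proof -
    have "f (of_nat y) * (- 1) ^ y = (\<Sum>k\<in>K. A k * (- v k) ^ y)" for y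
      unfolding f sum_distrib_right by (simp add: mult.assoc flip: power_mult_distrib)
    then have "(\<Sum>y<p ^ N. f (of_nat y) * (- 1) ^ y) = (\<Sum>y<p ^ N. \<Sum>k\<in>K. A k * (- v k) ^ y)"
      by simp
    also have "\<dots> = (\<Sum>k\<in>K. \<Sum>y<p ^ N. A k * (- v k) ^ y)"
      by (rule sum.swap)
    also have "\<dots> = (\<Sum>k\<in>K. A k * (\<Sum>y<p ^ N. (- v k) ^ y))"
      by (simp only: sum_distrib_left)
    also have "\<dots> = (\<Sum>k\<in>K. A k / (1 + v k) * (1 + v k ^ p ^ N))"
      using odd_p near_1 one_plus_nonzero_if_near_1
      by (intro sum.cong refl) (simp add: sum_alternating_powers_odd)
    finally show ?thesis .
  qed
  have "nv_tendsto nv (\<lambda>N. \<Sum>k\<in>K. A k / (1 + v k) * (1 + v k ^ p ^ N))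
      (\<Sum>k\<in>K. A k / (1 + v k) * (1 + 1))"
    using near_1
    by (intro nv_tendsto_sum assms(1) nv_tendsto_mult_left nv_tendsto_add nv_tendsto_const
        nv_tendsto_power_prime_power)
  moreover have "(\<Sum>k\<in>K. A k / (1 + v k) * (1 + 1)) = (\<Sum>k\<in>K. 2 * A k / (1 + v k))"
    by (intro sum.cong refl) simp
  ultimately show ?thesis
    unfolding fint_def partial_sum by (simp add: nv_lim_eqI)
qed

lemma fint_multi_exponential_sum:
  assumes "finite K" and near_1: "\<And>k l. k \<in> K \<Longrightarrow> nv (v k l - 1) < 1"
    and "\<And>y. F (\<lambda>l. of_nat (y l)) = (\<Sum>k\<in>K. A k * (\<Prod>l<r. v k l ^ y l))"
  shows "fint_multi p nv r F = (\<Sum>k\<in>K. A k * (\<Prod>l<r. 2 / (1 + v k l)))"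
  using assms(3)
proof (induction r arbitrary: F A)
  case 0
  show ?case using "0.prems"[of "\<lambda>_. 0"] by simp
next
  case (Suc r)
  define F' where "F' = (\<lambda>ys. fint p nv (\<lambda>y. F (ys(r := y))))"
  have "F' (\<lambda>l. of_nat (y l)) = (\<Sum>k\<in>K. (A k * (2 / (1 + v k r))) * (\<Prod>l<r. v k l ^ y l))"
    for y
  proof -
    have "F ((\<lambda>l. of_nat (y l))(r := of_nat t))
        = (\<Sum>k\<in>K. (A k * (\<Prod>l<r. v k l ^ y l)) * v k r ^ t)" for t
    proof -
      have "(\<lambda>l. of_nat (y l))(r := of_nat t) = (\<lambda>l. of_nat ((y(r := t)) l))" by auto
      then have "F ((\<lambda>l. of_nat (y l))(r := of_nat t)) = F (\<lambda>l. of_nat ((y(r := t)) l))"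
        by (rule arg_cong)
      then show ?thesis using Suc.prems[of "y(r := t)"] by (simp add: mult.assoc)
    qed
    then have "F' (\<lambda>l. of_nat (y l))
        = (\<Sum>k\<in>K. 2 * (A k * (\<Prod>l<r. v k l ^ y l)) / (1 + v k r))"
      unfolding F'_def using near_1 by (intro fint_exponential_sum assms(1))
    then show ?thesis by (simp add: mult_ac)
  qed
  then have "fint_multi p nv r F'
      = (\<Sum>k\<in>K. (A k * (2 / (1 + v k r))) * (\<Prod>l<r. 2 / (1 + v k l)))"
    by (rule Suc.IH)
  then show ?case by (simp add: F'_def mult_ac)
qed

end

text \<open>The common value of both sides of the symmetry; Q stands for q^{w1 w2 x}.\<close>

definition q_sym_sum :: "'a::field \<Rightarrow> int \<Rightarrow> nat \<Rightarrow> nat \<Rightarrow> 'a \<Rightarrow> nat \<Rightarrow> nat \<Rightarrow> 'a" where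
  "q_sym_sum q h r n Q w1 w2 = (\<Sum>k\<le>n. of_nat (n choose k) * (- Q) ^ k / (1 - q) ^ n *
     (\<Prod>l<r. 2 * (1 + q powi (int w1 * int w2 * (h - int (l + 1) + int k))) /
        ((1 + q powi (int w1 * (h - int (l + 1) + int k)))
          * (1 + q powi (int w2 * (h - int (l + 1) + int k))))))"

lemma q_sym_sum_commute: "q_sym_sum q h r n Q w1 w2 = q_sym_sum q h r n Q w2 w1"
  unfolding q_sym_sum_def by (simp add: mult_ac)

locale q_euler_setting = odd_padic_abs nv p for nv :: "'a::field \<Rightarrow> real" and p +
  fixes q :: 'a
  assumes complete: "nv_cauchy nv f \<Longrightarrow> \<exists>L. nv_tendsto nv f L"
    and nv_1_minus_q: "nv (1 - q) < 1"
begin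

lemma q_near_1: "nv (q - 1) < 1"
  using nv_1_minus_q nv_diff_commute by simp

lemma q_nonzero: "q \<noteq> 0"
  using nv_eq_1_if_near_1[OF q_near_1] by auto

lemma power_int_q_near_1: "nv (q powi k - 1) < 1"
  using nv_power_int_diff_1_le[OF q_near_1] q_near_1 by (rule le_less_trans)

lemma qpow_tendsto:
  assumes s: "nv_tendsto nv (\<lambda>m. of_int (s m)) x"
  shows "nv_tendsto nv (\<lambda>m. q powi s m) (qpow nv q x)"
proof -
  have "nv_cauchy nv (\<lambda>m. q powi s m)"
    unfolding nv_cauchy_def
    using nv_power_int_diff_eventually_small[OF q_near_1 _ s s] by metis
  then obtain L where L: "nv_tendsto nv (\<lambda>m. q powi s m) L" using complete by blast
  have along: "nv_tendsto nv (\<lambda>m. q powi s' m) L"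
    if s': "nv_tendsto nv (\<lambda>m. of_int (s' m)) x" for s'
    unfolding nv_tendsto_def
  proof (intro allI impI)
    fix e :: real
    assume "e > 0"
    then obtain N where N: "\<And>m k. m \<ge> N \<Longrightarrow> k \<ge> N \<Longrightarrow> nv (q powi s' m - q powi s k) < e"
      using nv_power_int_diff_eventually_small[OF q_near_1 _ s' s] by blast
    obtain N' where N': "\<forall>m\<ge>N'. nv (q powi s m - L) < e"
      using L \<open>e > 0\<close> unfolding nv_tendsto_def by blast
    have "nv (q powi s' m - L) < e" if "m \<ge> max N N'" for m
      using that N[of m m] N' nv_diff_trans_le[of "q powi s' m" L "q powi s m"] by auto
    then show "\<exists>N. \<forall>m\<ge>N. nv (q powi s' m - L) < e" by blast
  qed
  have "qpow nv q x = L"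
    unfolding qpow_def
  proof (rule the_equality)
    fix M
    assume "\<forall>s. nv_tendsto nv (\<lambda>m. of_int (s m)) x \<longrightarrow> nv_tendsto nv (\<lambda>m. q powi s m) M"
    then show "M = L" using s L nv_tendsto_unique by blast
  qed (use along in blast)
  then show ?thesis using L by simp
qed

lemma qpow_of_int: "qpow nv q (of_int k) = q powi k"
  using qpow_tendsto[of "\<lambda>m. k" "of_int k"] nv_tendsto_const nv_tendsto_unique by metis

lemma qpow_add_of_int:
  assumes "x \<in> Zp nv"
  shows "qpow nv q (x + of_int k) = qpow nv q x * q powi k"
proof -
  obtain s where s: "nv_tendsto nv (\<lambda>m. of_int (s m)) x" using assms unfolding Zp_def by blast
  then have "nv_tendsto nv (\<lambda>m. of_int (s m + k)) (x + of_int k)"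
    unfolding nv_tendsto_def by simp
  then have "nv_tendsto nv (\<lambda>m. q powi (s m + k)) (qpow nv q (x + of_int k))"
    by (rule qpow_tendsto)
  then have "nv_tendsto nv (\<lambda>m. q powi k * q powi s m) (qpow nv q (x + of_int k))"
    using q_nonzero by (simp add: power_int_add mult.commute)
  moreover have "nv_tendsto nv (\<lambda>m. q powi k * q powi s m) (q powi k * qpow nv q x)"
    using nv_tendsto_mult_left[OF qpow_tendsto[OF s]] .
  ultimately show ?thesis using nv_tendsto_unique by (metis mult.commute)
qed

lemma Eq_integrand_expansion:
  assumes X: "X \<in> Zp nv"
  shows "qpow nv q (of_nat w * (\<Sum>l<r. of_int (h - int (l + 1)) * of_nat (v l)))
      * qnum nv q w (X + of_int S + of_nat w * (\<Sum>l<r. of_nat (v l))) ^ n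
    = (\<Sum>k\<le>n. of_nat (n choose k) * (- (qpow nv q X * q powi S)) ^ k / (1 - q ^ w) ^ n
        * (\<Prod>l<r. (q powi (int w * (h - int (l + 1) + int k))) ^ v l))"
proof -
  define V where "V = (\<Sum>l<r. v l)"
  define E where "E = (\<Sum>l<r. (h - int (l + 1)) * int (v l))"
  define B where "B = qpow nv q X * q powi S * q powi (int w * int V)"
  have "of_nat w * (\<Sum>l<r. of_int (h - int (l + 1)) * (of_nat (v l) :: 'a)) = of_int (int w * E)"
    by (simp add: E_def)
  then have weight: "qpow nv q (of_nat w * (\<Sum>l<r. of_int (h - int (l + 1)) * of_nat (v l)))
      = q powi (int w * E)"
    by (simp only: qpow_of_int)
  have shift: "X + of_int S + of_nat w * (\<Sum>l<r. of_nat (v l)) = X + of_int (S + int w * int V)"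
    by (simp add: V_def)
  have "qpow nv q (X + of_int S + of_nat w * (\<Sum>l<r. of_nat (v l))) = B"
    unfolding shift qpow_add_of_int[OF X] B_def using q_nonzero by (simp add: power_int_add mult.assoc)
  then have q_number: "qnum nv q w (X + of_int S + of_nat w * (\<Sum>l<r. of_nat (v l)))
      = (1 - B) / (1 - q ^ w)"
    by (simp only: qnum_def)
  have "(1 - B) ^ n = (\<Sum>k\<le>n. of_nat (n choose k) * (- B) ^ k)"
    using binomial_ring[of "- B" 1 n] by simp
  moreover have "(- B) ^ k = (- (qpow nv q X * q powi S)) ^ k * (q powi (int w * int V)) ^ k" for k
    by (simp add: B_def flip: power_mult_distrib)
  moreover have "(\<Prod>l<r. (q powi (int w * (h - int (l + 1) + int k))) ^ v l)
      = q powi (int w * E) * (q powi (int w * int V)) ^ k" for k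
    using prod_power_int_shifted[OF q_nonzero, of 1 w h k v r] by (simp add: E_def V_def)
  ultimately show ?thesis
    unfolding weight q_number power_divide
    by (simp add: sum_distrib_left sum_divide_distrib mult_ac)
qed

lemma Eq_closed_form:
  assumes "X \<in> Zp nv"
  shows "Eq p nv q w h r n (X + of_int S) =
    (\<Sum>k\<le>n. of_nat (n choose k) * (- (qpow nv q X * q powi S)) ^ k / (1 - q ^ w) ^ n
       * (\<Prod>l<r. 2 / (1 + q powi (int w * (h - int (l + 1) + int k)))))"
  unfolding Eq_def
  by (rule fint_multi_exponential_sum, simp, rule power_int_q_near_1,
      rule Eq_integrand_expansion[OF assms])

lemma weighted_Eq_expansion:
  assumes X: "X \<in> Zp nv"
  shows "(- 1) ^ (\<Sum>l<r. j l) * q powi (int w' * (\<Sum>l<r. (h - int (l + 1)) * int (j l)))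
      * Eq p nv q w h r n (X + of_nat w' * of_nat (\<Sum>l<r. j l))
    = (\<Sum>k\<le>n. of_nat (n choose k) * (- qpow nv q X) ^ k / (1 - q ^ w) ^ n
        * (\<Prod>l<r. 2 / (1 + q powi (int w * (h - int (l + 1) + int k))))
        * (\<Prod>l<r. (- (q powi (int w' * (h - int (l + 1) + int k)))) ^ j l))"
proof -
  define J where "J = (\<Sum>l<r. j l)"
  define E where "E = (\<Sum>l<r. (h - int (l + 1)) * int (j l))"
  have signs: "(\<Prod>l<r. (- (q powi (int w' * (h - int (l + 1) + int k)))) ^ j l)
      = (- 1) ^ J * q powi (int w' * E) * (q powi (int w' * int J)) ^ k" for k
    using prod_power_int_shifted[OF q_nonzero, of "- 1" w' h k j r] by (simp add: J_def E_def)
  have neg: "(- (a * b)) ^ k = (- a) ^ k * b ^ k" for a b :: 'a and k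
    by (metis minus_mult_left power_mult_distrib)
  have "X + of_nat w' * of_nat J = X + of_int (int w' * int J)" by simp
  then have "Eq p nv q w h r n (X + of_nat w' * of_nat J)
      = (\<Sum>k\<le>n. of_nat (n choose k) * (- qpow nv q X) ^ k / (1 - q ^ w) ^ n
          * (\<Prod>l<r. 2 / (1 + q powi (int w * (h - int (l + 1) + int k))))
          * (q powi (int w' * int J)) ^ k)"
    using Eq_closed_form[OF X, of w h r n "int w' * int J"]
    by (simp add: neg mult_ac)
  then show ?thesis
    unfolding signs J_def[symmetric] E_def[symmetric] by (simp add: sum_distrib_left mult_ac)
qed

lemma weighted_Eq_sum_eq_q_sym_sum:
  assumes X: "X \<in> Zp nv" and "q ^ w \<noteq> 1" and "odd w"
  shows "((1 - q ^ w) / (1 - q)) ^ n *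
      (\<Sum>j\<in>Pi\<^sub>E {..<r} (\<lambda>_. {..<w}).
         (- 1) ^ (\<Sum>l<r. j l) * q powi (int w' * (\<Sum>l<r. (h - int (l + 1)) * int (j l)))
         * Eq p nv q w h r n (X + of_nat w' * of_nat (\<Sum>l<r. j l)))
    = q_sym_sum q h r n (qpow nv q X) w w'" (is "_ * ?S = _")
proof -
  define c where "c k = of_nat (n choose k) * (- qpow nv q X) ^ k / (1 - q ^ w) ^ n
    * (\<Prod>l<r. 2 / (1 + q powi (int w * (h - int (l + 1) + int k))))" for k
  define u where "u k l = q powi (int w' * (h - int (l + 1) + int k))" for k l
  have "?S = (\<Sum>j\<in>Pi\<^sub>E {..<r} (\<lambda>_. {..<w}). \<Sum>k\<le>n. c k * (\<Prod>l<r. (- u k l) ^ j l))"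
    unfolding weighted_Eq_expansion[OF X] c_def u_def ..
  also have "\<dots> = (\<Sum>k\<le>n. c k * (\<Sum>j\<in>Pi\<^sub>E {..<r} (\<lambda>_. {..<w}). \<Prod>l<r. (- u k l) ^ j l))"
    by (subst sum.swap) (simp only: sum_distrib_left)
  also have "\<dots> = (\<Sum>k\<le>n. c k * (\<Prod>l<r. (1 + u k l ^ w) / (1 + u k l)))"
    using \<open>odd w\<close> one_plus_nonzero_if_near_1[OF power_int_q_near_1]
    by (simp add: sum_PiE_prod_alternating_powers u_def)
  finally have sum_eq: "?S = (\<Sum>k\<le>n. c k * (\<Prod>l<r. (1 + u k l ^ w) / (1 + u k l)))" .
  have "1 - q ^ w \<noteq> 0" using \<open>q ^ w \<noteq> 1\<close> by simp
  moreover have "u k l ^ w = q powi (int w * int w' * (h - int (l + 1) + int k))" for k l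
    by (simp add: u_def power_int_power' mult_ac)
  ultimately show ?thesis
    unfolding sum_eq unfolding q_sym_sum_def sum_distrib_left c_def
    by (intro sum.cong refl) (simp add: power_divide prod.distrib[symmetric] mult_ac u_def)
qed

end

theorem theorem3:
  fixes p :: nat and nv :: "'a::field \<Rightarrow> real" and q x :: 'a
    and h :: int and r n w1 w2 :: nat
  assumes "prime p" and "odd p" and "is_Cp_model p nv"
    and "nv (1 - q) < 1"
    and "q ^ w1 \<noteq> 1" and "q ^ w2 \<noteq> 1"
    and "odd w1" and "odd w2"
    and "x \<in> Zp nv"
  shows "((1 - q ^ w1) / (1 - q)) ^ n *
      (\<Sum>j\<in>Pi\<^sub>E {..<r} (\<lambda>_. {..<w1}).
         (- 1) ^ (\<Sum>l<r. j l) * q powi (int w2 * (\<Sum>l<r. (h - int (l + 1)) * int (j l)))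
         * Eq p nv q w1 h r n (of_nat w1 * of_nat w2 * x + of_nat w2 * of_nat (\<Sum>l<r. j l)))
   = ((1 - q ^ w2) / (1 - q)) ^ n *
      (\<Sum>j\<in>Pi\<^sub>E {..<r} (\<lambda>_. {..<w2}).
         (- 1) ^ (\<Sum>l<r. j l) * q powi (int w1 * (\<Sum>l<r. (h - int (l + 1)) * int (j l)))
         * Eq p nv q w2 h r n (of_nat w2 * of_nat w1 * x + of_nat w1 * of_nat (\<Sum>l<r. j l)))"
proof -
  interpret q_euler_setting nv p q
    by unfold_locales (use assms in \<open>auto simp: is_Cp_model_def\<close>)
  have X: "of_nat w1 * of_nat w2 * x \<in> Zp nv"
    using Zp_of_nat_mult[OF Zp_of_nat_mult[OF \<open>x \<in> Zp nv\<close>]] by (simp add: mult.assoc)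
  have swap: "of_nat w2 * of_nat w1 * x = of_nat w1 * of_nat w2 * x" by (simp add: mult_ac)
  show ?thesis
    unfolding swap weighted_Eq_sum_eq_q_sym_sum[OF X \<open>q ^ w1 \<noteq> 1\<close> \<open>odd w1\<close>]
      weighted_Eq_sum_eq_q_sym_sum[OF X \<open>q ^ w2 \<noteq> 1\<close> \<open>odd w2\<close>]
    by (rule q_sym_sum_commute)
qed

end
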